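(* Let $T$ and $A$ be closed Hermitian subspaces in $X^2$ and $S$ a self-adjoint subspace in $X^2$, with $D(T)=D(S)=:D\subset D(A)$ and $T=S+A$, and assume $\rho(T)\cap\rho(S)\neq\emptyset$. Let $Q:A(0)^\perp\to S(0)^\perp$ be the orthogonal projection. Then $QA_s$ restricted to $D$ is a finite rank operator if and only if $T$ is a finite rank perturbation of $S$.
   Context: $X$ is a complex Hilbert space and $X^2=X\times X$ carries the inner product $\langle (x,f),(y,g)\rangle=\langle x,y\rangle+\langle f,g\rangle$. A subspace $T$ in $X^2$ means a linear subspace of $X^2$ (a linear relation); a linear operator in $X$ is identified with its graph. Notation: $D(T)=\{x:(x,f)\in T \text{ for some } f\}$, $T(x)=\{f:(x,f)\in T\}$, $T^{-1}=\{(f,x):(x,f)\in T\}$, $\lambda I$ is the graph of $x\mapsto \lambda x$. The adjoint is $T^*=\{(y,g)\in X^2:\langle g,x\rangle=\langle y,f\rangle \text{ for all }(x,f)\in T\}$; $T$ is Hermitian if $T\subset T^*$ and self-adjoint if $T=T^*$. For subspaces $S,A$ in $X^2$, $S+A=\{(x,f+g):(x,f)\in S,(x,g)\in A\}$. For a closed subspace $T$, set $T_\infty=\{(0,g)\in X^2:(0,g)\in T\}$ and $T_s=T\ominus T_\infty$ (orthogonal complement of $T_\infty$ in $T$), so $T=T_s\oplus T_\infty$; $T_s$ is the graph of a linear operator (the operator part of $T$) with $D(T_s)=D(T)$ and $R(T_s)\subset T(0)^\perp$. Resolvent set: $\rho(T)=\{\lambda\in\mathbb C:(\lambda I-T)^{-1}$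 is a bounded linear operator defined on all of $X\}$. Finite rank perturbation: for closed subspaces $T,S$ in $X^2$ with orthogonal projections $P_T,P_S$ of $X^2$ onto $T$, $S$, $T$ is a finite rank perturbation of $S$ if $P_T-P_S$ has finite-dimensional range. *)

theory Defs
  imports "HOL-Analysis.Analysis"
begin

text \<open>The library has no complex inner product spaces, so we introduce them as a type
class: a real normed vector space with a compatible complex scalar multiplication and a
complex inner product (linear in the first argument, conjugate-symmetric) inducing the norm.\<close>

class complex_inner = real_normed_vector +
  fixes scaleC :: "complex \<Rightarrow> 'a \<Rightarrow> 'a" (infixr \<open>*\<^sub>C\<close> 75)
    and cinner :: "'a \<Rightarrow> 'a \<Rightarrow> complex"
  assumes scaleC_add_right: "a *\<^sub>C (x + y) = a *\<^sub>C x + a *\<^sub>C y"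
    and scaleC_add_left: "(a + b) *\<^sub>C x = a *\<^sub>C x + b *\<^sub>C x"
    and scaleC_scaleC: "a *\<^sub>C (b *\<^sub>C x) = (a * b) *\<^sub>C x"
    and scaleC_one: "1 *\<^sub>C x = x"
    and scaleR_scaleC: "scaleR r x = complex_of_real r *\<^sub>C x"
    and cinner_commute: "cinner x y = cnj (cinner y x)"
    and cinner_add_left: "cinner (x + y) z = cinner x z + cinner y z"
    and cinner_scaleC_left: "cinner (a *\<^sub>C x) y = a * cinner x y"
    and cinner_self_norm: "cinner x x = complex_of_real ((norm x)\<^sup>2)"

class chilbert_space = complex_inner + complete_space

definition ip2 :: "('a::complex_inner \<times> 'a) \<Rightarrow> ('a \<times> 'a) \<Rightarrow> complex" where
  "ip2 p q = cinner (fst p) (fst q) + cinner (snd p) (snd q)"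

definition scaleC2 :: "complex \<Rightarrow> ('a::complex_inner \<times> 'a) \<Rightarrow> ('a \<times> 'a)" where
  "scaleC2 c p = (c *\<^sub>C fst p, c *\<^sub>C snd p)"

definition lin_subspace :: "('a::complex_inner \<times> 'a) set \<Rightarrow> bool" where
  "lin_subspace T \<longleftrightarrow> (0, 0) \<in> T \<and>
     (\<forall>p\<in>T. \<forall>q\<in>T. p + q \<in> T) \<and> (\<forall>c. \<forall>p\<in>T. scaleC2 c p \<in> T)"

definition adj :: "('a::complex_inner \<times> 'a) set \<Rightarrow> ('a \<times> 'a) set" where
  "adj T = {(y, g). \<forall>(x, f)\<in>T. cinner g x = cinner y f}"

definition hermitian :: "('a::complex_inner \<times> 'a) set \<Rightarrow> bool" where
  "hermitian T \<longleftrightarrow> T \<subseteq> adj T"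

definition self_adjoint :: "('a::complex_inner \<times> 'a) set \<Rightarrow> bool" where
  "self_adjoint T \<longleftrightarrow> T = adj T"

text \<open>Domain D(T) is the library's \<open>Domain T\<close>; T(x) is \<open>T `` {x}\<close>.\<close>

definition rel_sum :: "('a::complex_inner \<times> 'a) set \<Rightarrow> ('a \<times> 'a) set \<Rightarrow> ('a \<times> 'a) set" where
  "rel_sum S A = {(x, f + g) | x f g. (x, f) \<in> S \<and> (x, g) \<in> A}"

definition infty_part :: "('a::complex_inner \<times> 'a) set \<Rightarrow> ('a \<times> 'a) set" where
  "infty_part T = {p \<in> T. fst p = 0}"

definition op_part :: "('a::complex_inner \<times> 'a) set \<Rightarrow> ('a \<times> 'a) set" where
  "op_part T = {p \<in> T. \<forall>q \<in> infty_part T. ip2 p q = 0}"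

definition orth :: "'a::complex_inner set \<Rightarrow> 'a set" where
  "orth M = {y. \<forall>m\<in>M. cinner y m = 0}"

definition oproj :: "('b::ab_group_add \<Rightarrow> 'b \<Rightarrow> complex) \<Rightarrow> 'b set \<Rightarrow> 'b \<Rightarrow> 'b" where
  "oproj ip M x = (THE y. y \<in> M \<and> (\<forall>m\<in>M. ip (x - y) m = 0))"

definition fin_dim :: "(complex \<Rightarrow> 'b \<Rightarrow> 'b) \<Rightarrow> 'b::comm_monoid_add set \<Rightarrow> bool" where
  "fin_dim sc R \<longleftrightarrow> (\<exists>F. finite F \<and> R \<subseteq> {\<Sum>v\<in>F. sc (c v) v | c. True})"

text \<open>Resolvent set: (\<lambda>I - T)^{-1} is a bounded linear operator defined on all of X.\<close>
definition resolvent_set :: "('a::complex_inner \<times> 'a) set \<Rightarrow> complex set" where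
  "resolvent_set T = {l. \<exists>R :: 'a \<Rightarrow> 'a.
      (\<forall>y x. (\<exists>f. (x, f) \<in> T \<and> y = l *\<^sub>C x - f) \<longleftrightarrow> x = R y) \<and>
      (\<forall>y z. R (y + z) = R y + R z) \<and> (\<forall>c y. R (c *\<^sub>C y) = c *\<^sub>C R y) \<and>
      (\<exists>K. \<forall>y. norm (R y) \<le> K * norm y)}"

definition finite_rank_perturbation :: "('a::complex_inner \<times> 'a) set \<Rightarrow> ('a \<times> 'a) set \<Rightarrow> bool" where
  "finite_rank_perturbation T S \<longleftrightarrow>
     fin_dim scaleC2 (range (\<lambda>p. oproj ip2 T p - oproj ip2 S p))"

text \<open>Range of the operator Q A_s restricted to D, where Q : A(0)^\<bottom> \<rightarrow> S(0)^\<bottom> is the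
orthogonal projection (range of A_s lies in A(0)^\<bottom>).\<close>
definition QAs_range :: "('a::complex_inner \<times> 'a) set \<Rightarrow> ('a \<times> 'a) set \<Rightarrow> 'a set \<Rightarrow> 'a set" where
  "QAs_range S A D = {oproj cinner (orth (S `` {0})) f | x f. x \<in> D \<and> (x, f) \<in> op_part A}"

end

theory Submission
  imports Defs
begin

text \<open>Write \<open>D = D(S) = D(T)\<close>. As \<open>S\<close> is self-adjoint, \<open>S(0) = D\<^sup>\<bottom>\<close>; as \<open>A\<close> is Hermitian,
\<open>A(0) \<subseteq> D(A)\<^sup>\<bottom> \<subseteq> S(0)\<close>. So every component of \<open>A x\<close> outside \<open>S(0)\<^sup>\<bottom>\<close> is absorbed by \<open>S\<close>,
and \<open>T = {(x, y). (x, y - Q A\<^sub>s x) \<in> S}\<close>. Consequently \<open>\<Phi>(x, y) = Q A\<^sub>s x\<close> vanishes on an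
element of \<open>T\<close> only if it lies in \<open>S\<close>, and on an element of \<open>S\<close> exactly if it lies in \<open>T\<close>.

If \<open>Q A\<^sub>s\<close> has finite rank, \<open>\<Phi>\<close> embeds \<open>T \<ominus> (S \<inter> T)\<close> and \<open>S \<ominus> (S \<inter> T)\<close> into its range, and
\<open>P\<^sub>T - P\<^sub>S = (P\<^sub>T - P\<^sub>S\<^sub>\<inter>\<^sub>T) - (P\<^sub>S - P\<^sub>S\<^sub>\<inter>\<^sub>T)\<close> takes values in their sum. Conversely, on \<open>T\<close>
the map \<open>t \<mapsto> t - P\<^sub>S t = (P\<^sub>T - P\<^sub>S) t\<close> has kernel \<open>S \<inter> T\<close>, on which \<open>\<Phi>\<close> vanishes, so the
range of \<open>\<Phi>\<close> on \<open>T\<close> is a linear image of a subspace of the range of \<open>P\<^sub>T - P\<^sub>S\<close>.\<close>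

interpretation complex_vector: vector_space "scaleC :: complex \<Rightarrow> 'a::complex_inner \<Rightarrow> 'a"
  by unfold_locales (auto simp: scaleC_add_right scaleC_add_left scaleC_scaleC scaleC_one)

section \<open>Complex inner products\<close>

lemma cinner_zero_left [simp]: "cinner 0 y = 0"
  using cinner_add_left[of 0 0 y] by simp

lemma cinner_zero_right [simp]: "cinner x 0 = 0"
  using cinner_commute[of x 0] by simp

lemma cinner_add_right: "cinner x (y + z) = cinner x y + cinner x z"
  by (metis cinner_add_left cinner_commute complex_cnj_add)

lemma cinner_scaleC_right: "cinner x (a *\<^sub>C y) = cnj a * cinner x y"
  by (metis cinner_commute cinner_scaleC_left complex_cnj_mult)

lemma cinner_minus_left: "cinner (- x) y = - cinner x y"
  using cinner_add_left[of x "-x" y] by (simp add: add_eq_0_iff)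

lemma cinner_minus_right: "cinner x (- y) = - cinner x y"
  using cinner_add_right[of x y "-y"] by (simp add: add_eq_0_iff)

lemma cinner_diff_left: "cinner (x - y) z = cinner x z - cinner y z"
  using cinner_add_left[of x "-y" z] by (simp add: cinner_minus_left)

lemma cinner_diff_right: "cinner x (y - z) = cinner x y - cinner x z"
  using cinner_add_right[of x y "-z"] by (simp add: cinner_minus_right)

lemma cinner_self_eq_0 [simp]: "cinner x x = 0 \<longleftrightarrow> x = 0"
  by (simp add: cinner_self_norm)

lemma power2_norm_eq_cinner: "(norm x)\<^sup>2 = Re (cinner x x)"
  by (simp add: cinner_self_norm)

lemma power2_norm_add: "(norm (x + y))\<^sup>2 = (norm x)\<^sup>2 + (norm y)\<^sup>2 + 2 * Re (cinner x y)"
  using cinner_commute[of y x] by (simp add: power2_norm_eq_cinner cinner_add_left cinner_add_right)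

lemma power2_norm_diff: "(norm (x - y))\<^sup>2 = (norm x)\<^sup>2 + (norm y)\<^sup>2 - 2 * Re (cinner x y)"
  using cinner_commute[of y x] by (simp add: power2_norm_eq_cinner cinner_diff_left cinner_diff_right)

lemma parallelogram_law:
  "(norm (x + y))\<^sup>2 + (norm (x - y))\<^sup>2 = 2 * (norm x)\<^sup>2 + 2 * (norm (y::'a::complex_inner))\<^sup>2"
  by (simp add: power2_norm_add power2_norm_diff)

lemma polarization:
  "cinner x y = complex_of_real (((norm (x + y))\<^sup>2 - (norm (x - y))\<^sup>2) / 4)
     + \<i> * complex_of_real (((norm (x + \<i> *\<^sub>C y))\<^sup>2 - (norm (x - \<i> *\<^sub>C y))\<^sup>2) / 4)"
  by (simp add: complex_eq_iff power2_norm_add power2_norm_diff cinner_scaleC_right)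

lemma continuous_on_cinner_left [continuous_intros]:
  "continuous_on S g \<Longrightarrow> continuous_on S (\<lambda>p. cinner (g p) y)"
  unfolding polarization[of "g _" y] by (intro continuous_intros) auto

lemma continuous_on_cinner_right [continuous_intros]:
  assumes "continuous_on S g"
  shows "continuous_on S (\<lambda>p. cinner y (g p))"
proof -
  have "continuous_on S (\<lambda>p. cnj (cinner (g p) y))"
    by (intro continuous_intros assms)
  then show ?thesis by (subst cinner_commute) simp
qed

instantiation prod :: (complex_inner, complex_inner) complex_inner
begin

definition scaleC_prod_def: "scaleC c p = (c *\<^sub>C fst p, c *\<^sub>C snd p)"

definition cinner_prod_def: "cinner p q = cinner (fst p) (fst q) + cinner (snd p) (snd q)"

instance
proof
  fix a b :: complex and x y z :: "'a \<times> 'b" and r :: real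
  show "a *\<^sub>C (x + y) = a *\<^sub>C x + a *\<^sub>C y"
    by (simp add: scaleC_prod_def scaleC_add_right prod_eq_iff)
  show "(a + b) *\<^sub>C x = a *\<^sub>C x + b *\<^sub>C x"
    by (simp add: scaleC_prod_def scaleC_add_left prod_eq_iff)
  show "a *\<^sub>C b *\<^sub>C x = (a * b) *\<^sub>C x"
    by (simp add: scaleC_prod_def scaleC_scaleC)
  show "1 *\<^sub>C x = x"
    by (simp add: scaleC_prod_def scaleC_one)
  show "r *\<^sub>R x = complex_of_real r *\<^sub>C x"
    by (simp add: scaleC_prod_def scaleR_scaleC prod_eq_iff)
  show "cinner x y = cnj (cinner y x)"
    by (simp add: cinner_prod_def cinner_commute[of "fst x"] cinner_commute[of "snd x"])
  show "cinner (x + y) z = cinner x z + cinner y z"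
    by (simp add: cinner_prod_def cinner_add_left)
  show "cinner (a *\<^sub>C x) y = a * cinner x y"
    by (simp add: cinner_prod_def cinner_scaleC_left scaleC_prod_def algebra_simps)
  show "cinner x x = complex_of_real ((norm x)\<^sup>2)"
    by (simp add: cinner_prod_def cinner_self_norm norm_prod_def)
qed

end

instance prod :: (chilbert_space, chilbert_space) chilbert_space ..

lemma scaleC_Pair [simp]: "c *\<^sub>C (x, y) = (c *\<^sub>C x, c *\<^sub>C y)"
  by (simp add: scaleC_prod_def)

lemma fst_scaleC [simp]: "fst (c *\<^sub>C p) = c *\<^sub>C fst p"
  by (simp add: scaleC_prod_def)

lemma cinner_Pair [simp]: "cinner (a, b) (c, d) = cinner a c + cinner b d"
  by (simp add: cinner_prod_def)

lemma ip2_eq_cinner: "ip2 = cinner"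
  by (auto simp: fun_eq_iff ip2_def cinner_prod_def)

lemma scaleC2_eq_scaleC: "scaleC2 = scaleC"
  by (auto simp: fun_eq_iff scaleC2_def scaleC_prod_def)

section \<open>Orthogonal complements and projections\<close>

lemma orth_antimono: "A \<subseteq> B \<Longrightarrow> orth B \<subseteq> orth A"
  by (auto simp: orth_def)

lemma subset_orth_orth: "A \<subseteq> orth (orth A)"
  unfolding orth_def by clarsimp (metis cinner_commute complex_cnj_zero)

lemma orth_orth_orth [simp]: "orth (orth (orth A)) = orth A"
  by (meson antisym orth_antimono subset_orth_orth)

lemma orth_Int_self: "x \<in> M \<Longrightarrow> x \<in> orth M \<Longrightarrow> x = 0"
  unfolding orth_def using cinner_self_eq_0 by blast

lemma subspace_orth: "complex_vector.subspace (orth A)"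
  by (auto simp: complex_vector.subspace_def orth_def cinner_add_left cinner_scaleC_left)

lemma closed_orth: "closed (orth (A::'a::complex_inner set))"
proof -
  have "orth A = (\<Inter>m\<in>A. {y. cinner y m = 0})" by (auto simp: orth_def)
  moreover have "closed {y. cinner y m = 0}" for m :: 'a
    by (intro closed_Collect_eq continuous_intros)
  ultimately show ?thesis by auto
qed

lemma subspace_Int_orth: "complex_vector.subspace M \<Longrightarrow> complex_vector.subspace (M \<inter> orth K)"
  by (simp add: complex_vector.subspace_inter subspace_orth)

lemma orthogonal_if_nearest:
  fixes z m :: "'a::complex_inner"
  assumes nearest: "\<And>c. norm z \<le> norm (z - c *\<^sub>C m)"
  shows "cinner z m = 0"
proof (cases "m = 0")
  case False
  define n where "n = (norm m)\<^sup>2"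
  have n: "n > 0" using False by (simp add: n_def)
  define a where "a = cinner z m"
  define c where "c = a / complex_of_real n"
  have mm: "cinner m m = complex_of_real n" by (simp add: n_def cinner_self_norm)
  have sq: "cmod a * cmod a = Re a * Re a + Im a * Im a"
    using cmod_power2[of a] by (simp add: power2_eq_square)
  have "Re (cinner z (c *\<^sub>C m)) = (cmod a)\<^sup>2 / n"
    using n by (simp add: cinner_scaleC_right c_def a_def[symmetric] cmod_power2 field_simps
        power2_eq_square sq)
  moreover have "(norm (c *\<^sub>C m))\<^sup>2 = (cmod a)\<^sup>2 / n"
    unfolding power2_norm_eq_cinner using n
    by (simp add: cinner_scaleC_right cinner_scaleC_left mm c_def cmod_power2 field_simps
        power2_eq_square sq)
  moreover have "(norm z)\<^sup>2 \<le> (norm (z - c *\<^sub>C m))\<^sup>2"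
    using nearest[of c] by (simp add: power_mono)
  ultimately have "(cmod a)\<^sup>2 / n \<le> 0" by (simp add: power2_norm_diff)
  then show ?thesis using n by (simp add: a_def divide_le_0_iff)
qed simp

text \<open>The midpoint of two near points of a subspace is again near, which forces the points
to be close to each other.\<close>
lemma power2_norm_diff_midpoint:
  fixes x a b :: "'a::complex_inner"
  shows "(norm (a - b))\<^sup>2 =
    2 * (norm (x - a))\<^sup>2 + 2 * (norm (x - b))\<^sup>2 - 4 * (norm (x - (1/2::real) *\<^sub>R (a + b)))\<^sup>2"
proof -
  have "(x - a) + (x - b) = 2 *\<^sub>R (x - (1/2::real) *\<^sub>R (a + b))"
    by (simp add: algebra_simps scaleR_2)
  then have "(norm ((x - a) + (x - b)))\<^sup>2 = 4 * (norm (x - (1/2::real) *\<^sub>R (a + b)))\<^sup>2"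
    by (simp add: power_mult_distrib)
  moreover have "(norm ((x - a) - (x - b)))\<^sup>2 = (norm (a - b))\<^sup>2"
    by (simp add: norm_minus_commute)
  ultimately show ?thesis using parallelogram_law[of "x - a" "x - b"] by linarith
qed

lemma subspace_nearest_point_exists:
  fixes M :: "'a::chilbert_space set"
  assumes sub: "complex_vector.subspace M" and cl: "closed M"
  shows "\<exists>y\<in>M. \<forall>m\<in>M. norm (x - y) \<le> norm (x - m)"
proof -
  define f where "f m = (norm (x - m))\<^sup>2" for m
  define d where "d = Inf (f ` M)"
  have bdd: "bdd_below (f ` M)" by (auto simp: f_def intro!: bdd_belowI[of _ 0])
  have d_le: "d \<le> f m" if "m \<in> M" for m
    unfolding d_def using cInf_lower[OF _ bdd] that by blast
  have "\<exists>m\<in>M. f m < d + inverse (real (Suc n))" for n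
    using cInf_lessD[of "f ` M"] complex_vector.subspace_0[OF sub] by (force simp: d_def)
  then obtain s where s: "\<And>n. s n \<in> M" "\<And>n. f (s n) < d + inverse (real (Suc n))"
    by metis
  have close: "(dist (s i) (s j))\<^sup>2 \<le> 2 * inverse (real (Suc i)) + 2 * inverse (real (Suc j))"
    for i j
  proof -
    have "(1/2::real) *\<^sub>R (s i + s j) \<in> M"
      unfolding scaleR_scaleC
      by (intro complex_vector.subspace_scale[OF sub] complex_vector.subspace_add[OF sub] s)
    then have "d \<le> (norm (x - (1/2::real) *\<^sub>R (s i + s j)))\<^sup>2"
      using d_le by (simp add: f_def)
    moreover have "(norm (x - s i))\<^sup>2 < d + inverse (real (Suc i))"
      "(norm (x - s j))\<^sup>2 < d + inverse (real (Suc j))"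
      using s(2) by (simp_all add: f_def)
    ultimately show ?thesis
      using power2_norm_diff_midpoint[of "s i" "s j" x] by (simp add: dist_norm)
  qed
  have "Cauchy s"
    unfolding Cauchy_def
  proof (intro allI impI)
    fix e :: real assume e: "e > 0"
    obtain N where N: "inverse (real (Suc N)) < e\<^sup>2 / 4"
      using reals_Archimedean[of "e\<^sup>2/4"] e by auto
    have "dist (s m) (s n) < e" if "N \<le> m" "N \<le> n" for m n
    proof -
      have "inverse (real (Suc m)) \<le> inverse (real (Suc N))"
        "inverse (real (Suc n)) \<le> inverse (real (Suc N))"
        using that by (simp_all add: le_imp_inverse_le)
      then have "(dist (s m) (s n))\<^sup>2 < e\<^sup>2" using N close[of m n] by linarith
      then show ?thesis using e by (simp add: power2_less_imp_less)
    qed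
    then show "\<exists>M. \<forall>m\<ge>M. \<forall>n\<ge>M. dist (s m) (s n) < e" by blast
  qed
  then obtain y where y: "s \<longlonglongrightarrow> y"
    using Cauchy_convergent_iff convergent_def by blast
  have "f y \<le> d"
  proof (rule LIMSEQ_le)
    show "(\<lambda>n. f (s n)) \<longlonglongrightarrow> f y" unfolding f_def by (intro tendsto_intros y)
    show "(\<lambda>n. d + inverse (real (Suc n))) \<longlonglongrightarrow> d"
      using tendsto_add[OF tendsto_const LIMSEQ_inverse_real_of_nat, of d] by simp
    show "\<exists>N. \<forall>n\<ge>N. f (s n) \<le> d + inverse (real (Suc n))"
      using s(2) less_imp_le by blast
  qed
  then have "norm (x - y) \<le> norm (x - m)" if "m \<in> M" for m
    using d_le[OF that] by (simp add: f_def power2_le_imp_le)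
  moreover have "y \<in> M" using closed_sequentially[OF cl s(1) y] .
  ultimately show ?thesis by blast
qed

lemma orthogonal_projection_exists:
  fixes M :: "'a::chilbert_space set"
  assumes sub: "complex_vector.subspace M" and "closed M"
  shows "\<exists>y\<in>M. x - y \<in> orth M"
proof -
  obtain y where y: "y \<in> M" and nearest: "\<And>m. m \<in> M \<Longrightarrow> norm (x - y) \<le> norm (x - m)"
    using subspace_nearest_point_exists[OF assms] by blast
  have "cinner (x - y) m = 0" if "m \<in> M" for m
  proof (rule orthogonal_if_nearest)
    fix c
    have "y + c *\<^sub>C m \<in> M"
      by (intro complex_vector.subspace_add[OF sub] complex_vector.subspace_scale[OF sub] y that)
    from nearest[OF this] show "norm (x - y) \<le> norm (x - y - c *\<^sub>C m)"
      by (simp add: algebra_simps)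
  qed
  with y show ?thesis by (auto simp: orth_def)
qed

lemma oproj_eqI:
  assumes sub: "complex_vector.subspace M" and "y \<in> M" "x - y \<in> orth M"
  shows "oproj cinner M x = y"
  unfolding oproj_def
proof (rule the_equality)
  show "y \<in> M \<and> (\<forall>m\<in>M. cinner (x - y) m = 0)" using assms by (simp add: orth_def)
  fix y' assume y': "y' \<in> M \<and> (\<forall>m\<in>M. cinner (x - y') m = 0)"
  then have "x - y' \<in> orth M" by (simp add: orth_def)
  then have "(x - y) - (x - y') \<in> orth M"
    using assms(3) complex_vector.subspace_diff[OF subspace_orth] by blast
  then have "y' - y \<in> orth M" by simp
  moreover have "y' - y \<in> M" using complex_vector.subspace_diff[OF sub] y' assms(2) by blast
  ultimately have "y' - y = 0" using orth_Int_self by blast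
  then show "y' = y" by simp
qed

lemma
  fixes M :: "'a::chilbert_space set"
  assumes "complex_vector.subspace M" "closed M"
  shows oproj_in: "oproj cinner M x \<in> M"
    and diff_oproj_in_orth: "x - oproj cinner M x \<in> orth M"
  using orthogonal_projection_exists[OF assms, of x] oproj_eqI[OF assms(1)] by auto

lemma oproj_id: "complex_vector.subspace M \<Longrightarrow> x \<in> M \<Longrightarrow> oproj cinner M x = x"
  by (rule oproj_eqI) (auto simp: orth_def)

lemma
  fixes M :: "'a::chilbert_space set"
  assumes "complex_vector.subspace M" "closed M"
  shows oproj_add: "oproj cinner M (x + y) = oproj cinner M x + oproj cinner M y"
    and oproj_scaleC: "oproj cinner M (c *\<^sub>C x) = c *\<^sub>C oproj cinner M x"
proof -
  let ?P = "oproj cinner M"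
  note sub = assms(1) subspace_orth
  note in_M = oproj_in[OF assms] and in_orth = diff_oproj_in_orth[OF assms]
  have "?P x + ?P y \<in> M" using in_M complex_vector.subspace_add[OF sub(1)] by blast
  moreover have "x + y - (?P x + ?P y) = (x - ?P x) + (y - ?P y)" by simp
  then have "x + y - (?P x + ?P y) \<in> orth M"
    using in_orth complex_vector.subspace_add[OF sub(2)] by metis
  ultimately show "?P (x + y) = ?P x + ?P y" by (rule oproj_eqI[OF sub(1)])
  have "c *\<^sub>C ?P x \<in> M" using in_M complex_vector.subspace_scale[OF sub(1)] by blast
  moreover have "c *\<^sub>C x - c *\<^sub>C ?P x = c *\<^sub>C (x - ?P x)"
    by (simp add: complex_vector.scale_right_diff_distrib)
  then have "c *\<^sub>C x - c *\<^sub>C ?P x \<in> orth M"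
    using in_orth complex_vector.subspace_scale[OF sub(2)] by metis
  ultimately show "?P (c *\<^sub>C x) = c *\<^sub>C ?P x" by (rule oproj_eqI[OF sub(1)])
qed

section \<open>Finite-dimensional ranges\<close>

definition clinear_on :: "'a::complex_inner set \<Rightarrow> ('a \<Rightarrow> 'b::complex_inner) \<Rightarrow> bool" where
  "clinear_on U f \<longleftrightarrow>
     (\<forall>u\<in>U. \<forall>v\<in>U. f (u + v) = f u + f v) \<and> (\<forall>c. \<forall>u\<in>U. f (c *\<^sub>C u) = c *\<^sub>C f u)"

lemma clinear_on_subset: "clinear_on U f \<Longrightarrow> V \<subseteq> U \<Longrightarrow> clinear_on V f"
  unfolding clinear_on_def by blast

lemma clinear_on_diff:
  assumes "complex_vector.subspace U" "clinear_on U f" "u \<in> U" "v \<in> U"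
  shows "f (u - v) = f u - f v"
proof -
  have "u - v \<in> U" using complex_vector.subspace_diff assms by blast
  then have "f ((u - v) + v) = f (u - v) + f v" using assms unfolding clinear_on_def by blast
  then show ?thesis by (simp add: algebra_simps)
qed

lemma clinear_on_sum:
  assumes sub: "complex_vector.subspace U" and lin: "clinear_on U f"
    and "finite I" "\<And>i. i \<in> I \<Longrightarrow> v i \<in> U"
  shows "f (\<Sum>i\<in>I. c i *\<^sub>C v i) = (\<Sum>i\<in>I. c i *\<^sub>C f (v i))"
  using assms(3,4)
proof (induction I rule: finite_induct)
  case empty
  have "f (0 *\<^sub>C 0) = 0 *\<^sub>C f 0"
    using lin complex_vector.subspace_0[OF sub] unfolding clinear_on_def by blast
  then show ?case by simp
next
  case (insert a I)
  have "(\<Sum>i\<in>I. c i *\<^sub>C v i) \<in> U" "c a *\<^sub>C v a \<in> U"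
    using insert by (auto intro!: complex_vector.subspace_sum[OF sub]
        complex_vector.subspace_scale[OF sub])
  then show ?case using insert lin by (simp add: clinear_on_def)
qed

lemma fin_dim_iff_span: "fin_dim scaleC R \<longleftrightarrow> (\<exists>F. finite F \<and> R \<subseteq> complex_vector.span F)"
  unfolding fin_dim_def
  by (rule ex_cong1) (auto simp: complex_vector.span_finite subset_iff image_iff)

lemma fin_dim_subset: "fin_dim scaleC R \<Longrightarrow> R' \<subseteq> R \<Longrightarrow> fin_dim scaleC R'"
  by (auto simp: fin_dim_def)

lemma fin_dim_diffs:
  assumes "fin_dim scaleC V" "fin_dim scaleC W"
  shows "fin_dim scaleC {v - w | v w. v \<in> V \<and> w \<in> W}"
proof -
  obtain F G where "finite F" "V \<subseteq> complex_vector.span F" "finite G" "W \<subseteq> complex_vector.span G"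
    using assms unfolding fin_dim_iff_span by blast
  moreover have "complex_vector.span F \<union> complex_vector.span G \<subseteq> complex_vector.span (F \<union> G)"
    by (simp add: complex_vector.span_mono)
  ultimately have "{v - w | v w. v \<in> V \<and> w \<in> W} \<subseteq> complex_vector.span (F \<union> G)"
    by (blast intro: complex_vector.span_diff)
  then show ?thesis using \<open>finite F\<close> \<open>finite G\<close> unfolding fin_dim_iff_span by blast
qed

text \<open>If \<open>\<Phi>\<close> vanishes on the kernel of \<open>\<Psi>\<close>, then \<open>\<Phi>\<close> factors through \<open>\<Psi>\<close>: lifting a
finite basis of the range of \<open>\<Psi>\<close> back to \<open>U\<close>, its \<open>\<Phi>\<close>-image spans the range of \<open>\<Phi>\<close>.\<close>
lemma fin_dim_image_if_kernel_le:
  fixes \<Psi> :: "'a::complex_inner \<Rightarrow> 'b::complex_inner" and \<Phi> :: "'a \<Rightarrow> 'c::complex_inner"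
  assumes U: "complex_vector.subspace U" and lin\<Psi>: "clinear_on U \<Psi>" and lin\<Phi>: "clinear_on U \<Phi>"
    and kernel: "\<And>u. u \<in> U \<Longrightarrow> \<Psi> u = 0 \<Longrightarrow> \<Phi> u = 0"
    and fin: "fin_dim scaleC (\<Psi> ` U)"
  shows "fin_dim scaleC (\<Phi> ` U)"
proof -
  obtain F where F: "finite F" "\<Psi> ` U \<subseteq> complex_vector.span F"
    using fin unfolding fin_dim_iff_span by blast
  obtain B where B: "B \<subseteq> \<Psi> ` U" "complex_vector.independent B" "\<Psi> ` U \<subseteq> complex_vector.span B"
    by (meson complex_vector.basis_exists)
  have "finite B"
    using complex_vector.independent_span_bound[OF F(1) B(2)] B(1) F(2) by auto
  obtain g where g: "\<And>w. w \<in> B \<Longrightarrow> g w \<in> U \<and> \<Psi> (g w) = w"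
    using B(1) by (metis f_inv_into_f inv_into_into subsetD)
  have "\<Phi> ` U \<subseteq> complex_vector.span (\<Phi> ` g ` B)"
  proof
    fix z assume "z \<in> \<Phi> ` U"
    then obtain u where u: "z = \<Phi> u" "u \<in> U" by blast
    have "\<Psi> u \<in> complex_vector.span B" using B(3) u(2) by blast
    then obtain c where c: "\<Psi> u = (\<Sum>w\<in>B. c w *\<^sub>C w)"
      unfolding complex_vector.span_finite[OF \<open>finite B\<close>] by blast
    define v where "v = (\<Sum>w\<in>B. c w *\<^sub>C g w)"
    have v: "v \<in> U" unfolding v_def
      by (intro complex_vector.subspace_sum[OF U] complex_vector.subspace_scale[OF U]) (simp add: g)
    have "\<Psi> v = \<Psi> u"
      unfolding v_def c using g by (simp add: clinear_on_sum[OF U lin\<Psi> \<open>finite B\<close>])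
    then have "\<Phi> (u - v) = 0"
      using kernel[OF complex_vector.subspace_diff[OF U u(2) v]] clinear_on_diff[OF U lin\<Psi> u(2) v]
      by simp
    then have "z = (\<Sum>w\<in>B. c w *\<^sub>C \<Phi> (g w))"
      using clinear_on_diff[OF U lin\<Phi> u(2) v] u(1) g
      by (simp add: v_def clinear_on_sum[OF U lin\<Phi> \<open>finite B\<close>])
    then show "z \<in> complex_vector.span (\<Phi> ` g ` B)"
      by (simp add: complex_vector.span_base complex_vector.span_scale complex_vector.span_sum)
  qed
  moreover have "finite (\<Phi> ` g ` B)" using \<open>finite B\<close> by simp
  ultimately show ?thesis unfolding fin_dim_iff_span by blast
qed

lemma fin_dim_if_injective_image:
  assumes "complex_vector.subspace W" "clinear_on W \<Phi>"
    and "\<And>w. w \<in> W \<Longrightarrow> \<Phi> w = 0 \<Longrightarrow> w = 0" and "fin_dim scaleC (\<Phi> ` W)"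
  shows "fin_dim scaleC W"
  using fin_dim_image_if_kernel_le[of W \<Phi> "\<lambda>w. w"] assms by (simp add: clinear_on_def)

section \<open>Differences of orthogonal projections\<close>

lemma oproj_diff_oproj_in:
  fixes K T :: "'a::chilbert_space set"
  assumes K: "complex_vector.subspace K" "closed K" and T: "complex_vector.subspace T" "closed T"
    and "K \<subseteq> T"
  shows "oproj cinner T p - oproj cinner K p \<in> T \<inter> orth K"
proof
  show "oproj cinner T p - oproj cinner K p \<in> T"
    using oproj_in[OF T] oproj_in[OF K] \<open>K \<subseteq> T\<close> complex_vector.subspace_diff[OF T(1)] by blast
  have "p - oproj cinner T p \<in> orth K"
    using diff_oproj_in_orth[OF T] orth_antimono[OF \<open>K \<subseteq> T\<close>] by blast
  then have "(p - oproj cinner K p) - (p - oproj cinner T p) \<in> orth K"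
    using diff_oproj_in_orth[OF K] complex_vector.subspace_diff[OF subspace_orth] by blast
  then show "oproj cinner T p - oproj cinner K p \<in> orth K" by simp
qed

lemma fin_dim_Int_orth_if_kernel_le:
  assumes M: "complex_vector.subspace M" and lin: "clinear_on M \<Phi>"
    and fin: "fin_dim scaleC (\<Phi> ` M)" and kernel: "\<And>m. m \<in> M \<Longrightarrow> \<Phi> m = 0 \<Longrightarrow> m \<in> K"
  shows "fin_dim scaleC (M \<inter> orth K)"
proof (rule fin_dim_if_injective_image)
  show "complex_vector.subspace (M \<inter> orth K)" using subspace_Int_orth[OF M] .
  show "clinear_on (M \<inter> orth K) \<Phi>" using clinear_on_subset[OF lin] by blast
  show "w = 0" if "w \<in> M \<inter> orth K" "\<Phi> w = 0" for w
    using that kernel orth_Int_self by blast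
  show "fin_dim scaleC (\<Phi> ` (M \<inter> orth K))"
    by (rule fin_dim_subset[OF fin]) auto
qed

lemma fin_dim_oproj_diff_if_fin_dim_image:
  fixes S T :: "'a::chilbert_space set" and \<Phi> :: "'a \<Rightarrow> 'b::complex_inner"
  assumes S: "complex_vector.subspace S" "closed S" and T: "complex_vector.subspace T" "closed T"
    and lin: "clinear_on S \<Phi>" "clinear_on T \<Phi>"
    and fin: "fin_dim scaleC (\<Phi> ` S)" "fin_dim scaleC (\<Phi> ` T)"
    and T_to_S: "\<And>t. t \<in> T \<Longrightarrow> \<Phi> t = 0 \<Longrightarrow> t \<in> S"
    and S_to_T: "\<And>s. s \<in> S \<Longrightarrow> \<Phi> s = 0 \<Longrightarrow> s \<in> T"
  shows "fin_dim scaleC (range (\<lambda>p. oproj cinner T p - oproj cinner S p))"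
proof -
  define K where "K = S \<inter> T"
  have K: "complex_vector.subspace K" "closed K"
    using S T by (simp_all add: K_def complex_vector.subspace_inter closed_Int)
  have "fin_dim scaleC (T \<inter> orth K)"
    using fin_dim_Int_orth_if_kernel_le[OF T(1) lin(2) fin(2)] T_to_S by (simp add: K_def)
  moreover have "fin_dim scaleC (S \<inter> orth K)"
    using fin_dim_Int_orth_if_kernel_le[OF S(1) lin(1) fin(1)] S_to_T by (simp add: K_def)
  moreover have "oproj cinner T p - oproj cinner S p \<in>
      {v - w | v w. v \<in> T \<inter> orth K \<and> w \<in> S \<inter> orth K}" for p
  proof -
    have "K \<subseteq> T" "K \<subseteq> S" by (auto simp: K_def)
    then have "oproj cinner T p - oproj cinner K p \<in> T \<inter> orth K"
      "oproj cinner S p - oproj cinner K p \<in> S \<inter> orth K"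
      using oproj_diff_oproj_in[OF K T] oproj_diff_oproj_in[OF K S] by blast+
    moreover have "oproj cinner T p - oproj cinner S p
        = (oproj cinner T p - oproj cinner K p) - (oproj cinner S p - oproj cinner K p)"
      by simp
    ultimately show ?thesis by blast
  qed
  ultimately show ?thesis by (blast intro: fin_dim_subset[OF fin_dim_diffs])
qed

lemma fin_dim_image_if_fin_dim_oproj_diff:
  fixes S T :: "'a::chilbert_space set" and \<Phi> :: "'a \<Rightarrow> 'b::complex_inner"
  assumes S: "complex_vector.subspace S" "closed S" and T: "complex_vector.subspace T"
    and fin: "fin_dim scaleC (range (\<lambda>p. oproj cinner T p - oproj cinner S p))"
    and lin: "clinear_on T \<Phi>" and vanish: "\<And>t. t \<in> T \<Longrightarrow> t \<in> S \<Longrightarrow> \<Phi> t = 0"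
  shows "fin_dim scaleC (\<Phi> ` T)"
proof (rule fin_dim_image_if_kernel_le[OF T _ lin])
  show "clinear_on T (\<lambda>t. t - oproj cinner S t)"
    by (simp add: clinear_on_def oproj_add[OF S] oproj_scaleC[OF S]
        complex_vector.scale_right_diff_distrib)
  have "t - oproj cinner S t \<in> range (\<lambda>p. oproj cinner T p - oproj cinner S p)" if "t \<in> T" for t
    using oproj_id[OF T that] by (metis (no_types, lifting) rangeI)
  then show "fin_dim scaleC ((\<lambda>t. t - oproj cinner S t) ` T)"
    by (intro fin_dim_subset[OF fin] image_subsetI)
  show "\<Phi> t = 0" if "t \<in> T" "t - oproj cinner S t = 0" for t
    using that vanish oproj_in[OF S, of t] by simp
qed

lemma fin_dim_oproj_diff_iff_fin_dim_image:
  fixes S T :: "'a::chilbert_space set" and \<Phi> :: "'a \<Rightarrow> 'b::complex_inner"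
  assumes S: "complex_vector.subspace S" "closed S" and T: "complex_vector.subspace T" "closed T"
    and lin: "clinear_on S \<Phi>" "clinear_on T \<Phi>" and "\<Phi> ` S \<subseteq> \<Phi> ` T"
    and T_to_S: "\<And>t. t \<in> T \<Longrightarrow> \<Phi> t = 0 \<Longrightarrow> t \<in> S"
    and S_to_T: "\<And>s. s \<in> S \<Longrightarrow> s \<in> T \<longleftrightarrow> \<Phi> s = 0"
  shows "fin_dim scaleC (range (\<lambda>p. oproj cinner T p - oproj cinner S p)) \<longleftrightarrow>
    fin_dim scaleC (\<Phi> ` T)"
proof
  assume "fin_dim scaleC (range (\<lambda>p. oproj cinner T p - oproj cinner S p))"
  then show "fin_dim scaleC (\<Phi> ` T)"
    by (rule fin_dim_image_if_fin_dim_oproj_diff[OF S T(1) _ lin(2)]) (use S_to_T in blast)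
next
  assume "fin_dim scaleC (\<Phi> ` T)"
  moreover have "fin_dim scaleC (\<Phi> ` S)"
    using fin_dim_subset[OF \<open>fin_dim scaleC (\<Phi> ` T)\<close> \<open>\<Phi> ` S \<subseteq> \<Phi> ` T\<close>] .
  ultimately show "fin_dim scaleC (range (\<lambda>p. oproj cinner T p - oproj cinner S p))"
    using fin_dim_oproj_diff_if_fin_dim_image[OF S T lin] T_to_S S_to_T by blast
qed

section \<open>Linear relations\<close>

lemma lin_subspace_iff_subspace: "lin_subspace T \<longleftrightarrow> complex_vector.subspace T"
  by (simp add: lin_subspace_def complex_vector.subspace_def scaleC2_eq_scaleC zero_prod_def)

lemma finite_rank_perturbation_iff:
  "finite_rank_perturbation T S \<longleftrightarrow>
     fin_dim scaleC (range (\<lambda>p. oproj cinner T p - oproj cinner S p))"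
  by (simp add: finite_rank_perturbation_def scaleC2_eq_scaleC ip2_eq_cinner)

lemma
  assumes "complex_vector.subspace T" "(a, b) \<in> T" "(c, d) \<in> T"
  shows subspace_Pair_add: "(a + c, b + d) \<in> T"
    and subspace_Pair_diff: "(a - c, b - d) \<in> T"
  using complex_vector.subspace_add[OF assms] complex_vector.subspace_diff[OF assms] by simp_all

lemma subspace_Pair_scale: "complex_vector.subspace T \<Longrightarrow> (a, b) \<in> T \<Longrightarrow> (c *\<^sub>C a, c *\<^sub>C b) \<in> T"
  using complex_vector.subspace_scale[of T "(a, b)" c] by simp

lemma clinear_on_comp_fst:
  assumes "clinear_on D f" "Domain R \<subseteq> D"
  shows "clinear_on R (\<lambda>t. f (fst t))"
proof -
  have "fst t \<in> D" if "t \<in> R" for t using that assms(2) by (metis DomainI prod.collapse subsetD)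
  then show ?thesis using assms(1) by (simp add: clinear_on_def)
qed

lemma subspace_Image_zero:
  assumes T: "complex_vector.subspace T"
  shows "complex_vector.subspace (T `` {0})"
  unfolding complex_vector.subspace_def
  using complex_vector.subspace_0[OF T] subspace_Pair_add[OF T, of 0 _ 0] subspace_Pair_scale[OF T, of 0]
  by (auto simp: zero_prod_def)

lemma closed_Image_zero:
  assumes "closed (T::('a::real_normed_vector \<times> 'a) set)"
  shows "closed (T `` {0})"
proof -
  have "closed ((\<lambda>b. (0, b)) -` T)"
    by (rule continuous_closed_vimage[OF assms]) (intro continuous_intros)
  moreover have "T `` {0} = (\<lambda>b. (0, b)) -` T" by auto
  ultimately show ?thesis by simp
qed

lemma closed_adj: "closed (adj (T::('a::complex_inner \<times> 'a) set))"
proof -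
  have "adj T = (\<Inter>p\<in>T. {q. cinner (snd q) (fst p) = cinner (fst q) (snd p)})"
    unfolding adj_def by (auto; metis fst_conv snd_conv)
  moreover have "closed {q::'a\<times>'a. cinner (snd q) (fst p) = cinner (fst q) (snd p)}" for p
    by (intro closed_Collect_eq continuous_intros)
  ultimately show ?thesis by auto
qed

lemma adj_Image_zero: "adj T `` {0} = orth (Domain T)"
  by (auto simp: adj_def orth_def)

lemma hermitian_Image_zero: "hermitian A \<Longrightarrow> A `` {0} \<subseteq> orth (Domain A)"
  unfolding hermitian_def adj_Image_zero[symmetric] by blast

lemma self_adjoint_Image_zero: "self_adjoint S \<Longrightarrow> S `` {0} = orth (Domain S)"
  by (metis adj_Image_zero self_adjoint_def)

section \<open>The operator part\<close>

lemma op_part_eq: "op_part A = A \<inter> orth (infty_part A)"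
  by (auto simp: op_part_def orth_def ip2_eq_cinner)

lemma op_part_iff: "(x, f) \<in> op_part A \<longleftrightarrow> (x, f) \<in> A \<and> f \<in> orth (A `` {0})"
  by (auto simp: op_part_def infty_part_def orth_def ip2_eq_cinner)

lemma op_part_unique:
  assumes A: "complex_vector.subspace A" and "(x, f) \<in> op_part A" "(x, g) \<in> op_part A"
  shows "f = g"
proof -
  have "complex_vector.subspace (op_part A)"
    unfolding op_part_eq using subspace_Int_orth[OF A] .
  from subspace_Pair_diff[OF this assms(2,3)] have "(0, f - g) \<in> op_part A" by simp
  then have "f - g \<in> A `` {0}" "f - g \<in> orth (A `` {0})" by (simp_all add: op_part_iff)
  then have "f - g = 0" by (rule orth_Int_self)
  then show ?thesis by simp
qed

lemma op_part_exists:
  fixes A :: "('a::chilbert_space \<times> 'a) set"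
  assumes A: "complex_vector.subspace A" "closed A" and "x \<in> Domain A"
  shows "\<exists>f. (x, f) \<in> op_part A"
proof -
  obtain g where g: "(x, g) \<in> A" using \<open>x \<in> Domain A\<close> by blast
  note A0 = subspace_Image_zero[OF A(1)] closed_Image_zero[OF A(2)]
  let ?f = "g - oproj cinner (A `` {0}) g"
  have "(0, oproj cinner (A `` {0}) g) \<in> A" using oproj_in[OF A0] by blast
  then have "(x, ?f) \<in> A" using subspace_Pair_diff[OF A(1) g] by fastforce
  then show ?thesis using diff_oproj_in_orth[OF A0] by (auto simp: op_part_iff)
qed

definition op_part_fun :: "('a::complex_inner \<times> 'a) set \<Rightarrow> 'a \<Rightarrow> 'a" where
  "op_part_fun A x = (THE f. (x, f) \<in> op_part A)"

lemma op_part_fun_eqI: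
  "complex_vector.subspace A \<Longrightarrow> (x, f) \<in> op_part A \<Longrightarrow> op_part_fun A x = f"
  unfolding op_part_fun_def by (blast intro: the_equality op_part_unique)

lemma op_part_fun_in_op_part:
  fixes A :: "('a::chilbert_space \<times> 'a) set"
  assumes "complex_vector.subspace A" "closed A" "x \<in> Domain A"
  shows "(x, op_part_fun A x) \<in> op_part A"
  using op_part_exists[OF assms] op_part_fun_eqI[OF assms(1)] by blast

lemma clinear_on_op_part_fun:
  fixes A :: "('a::chilbert_space \<times> 'a) set"
  assumes A: "complex_vector.subspace A" "closed A"
  shows "clinear_on (Domain A) (op_part_fun A)"
proof -
  have sub: "complex_vector.subspace (op_part A)"
    unfolding op_part_eq using subspace_Int_orth[OF A(1)] .
  note in_op = op_part_fun_in_op_part[OF A]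
  show ?thesis unfolding clinear_on_def
  proof (intro conjI ballI allI)
    fix u v assume "u \<in> Domain A" "v \<in> Domain A"
    then show "op_part_fun A (u + v) = op_part_fun A u + op_part_fun A v"
      by (intro op_part_fun_eqI[OF A(1)] subspace_Pair_add[OF sub] in_op)
  next
    fix c u assume "u \<in> Domain A"
    then show "op_part_fun A (c *\<^sub>C u) = c *\<^sub>C op_part_fun A u"
      by (intro op_part_fun_eqI[OF A(1)] subspace_Pair_scale[OF sub] in_op)
  qed
qed

definition QAs :: "('a::complex_inner \<times> 'a) set \<Rightarrow> ('a \<times> 'a) set \<Rightarrow> 'a \<Rightarrow> 'a" where
  "QAs S A x = oproj cinner (orth (S `` {0})) (op_part_fun A x)"

lemma QAs_range_eq_image:
  fixes A :: "('a::chilbert_space \<times> 'a) set"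
  assumes A: "complex_vector.subspace A" "closed A" and "D \<subseteq> Domain A"
  shows "QAs_range S A D = QAs S A ` D"
proof (intro equalityI subsetI)
  fix z assume "z \<in> QAs_range S A D"
  then obtain x f where "z = oproj cinner (orth (S `` {0})) f" "x \<in> D" "(x, f) \<in> op_part A"
    by (auto simp: QAs_range_def)
  then have "z = QAs S A x" by (simp add: QAs_def op_part_fun_eqI[OF A(1)])
  with \<open>x \<in> D\<close> show "z \<in> QAs S A ` D" by blast
next
  fix z assume "z \<in> QAs S A ` D"
  then obtain x where "x \<in> D" "z = QAs S A x" by blast
  then show "z \<in> QAs_range S A D"
    using op_part_fun_in_op_part[OF A] assms(3) unfolding QAs_range_def QAs_def by blast
qed

lemma clinear_on_QAs:
  fixes A :: "('a::chilbert_space \<times> 'a) set"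
  assumes A: "complex_vector.subspace A" "closed A"
  shows "clinear_on (Domain A) (QAs S A)"
  using clinear_on_op_part_fun[OF A]
  by (simp add: clinear_on_def QAs_def oproj_add[OF subspace_orth closed_orth]
      oproj_scaleC[OF subspace_orth closed_orth])

lemma QAs_in_orth: "QAs S A x \<in> orth (S `` {0})"
  for S A :: "('a::chilbert_space \<times> 'a) set"
  unfolding QAs_def by (rule oproj_in[OF subspace_orth closed_orth])

lemma rel_sum_iff_shift:
  fixes S A :: "('a::chilbert_space \<times> 'a) set"
  assumes S: "complex_vector.subspace S" "self_adjoint S"
    and A: "complex_vector.subspace A" "closed A" "hermitian A"
    and dom: "Domain S \<subseteq> Domain A"
  shows "(x, y) \<in> rel_sum S A \<longleftrightarrow> (x, y - QAs S A x) \<in> S"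
proof -
  let ?f = "op_part_fun A x" and ?Q = "oproj cinner (orth (S `` {0}))"
  have "?f - ?Q ?f \<in> orth (orth (S `` {0}))"
    by (rule diff_oproj_in_orth[OF subspace_orth closed_orth])
  then have "?f - ?Q ?f \<in> S `` {0}" by (simp add: self_adjoint_Image_zero[OF S(2)])
  then have residual: "(0, ?f - ?Q ?f) \<in> S" by blast
  have f_in_A: "(x, ?f) \<in> A" if "x \<in> Domain S"
    using op_part_fun_in_op_part[OF A(1,2), of x] dom that unfolding op_part_iff by blast
  show ?thesis
  proof
    assume "(x, y) \<in> rel_sum S A"
    then obtain h g where y: "y = h + g" and h: "(x, h) \<in> S" and g: "(x, g) \<in> A"
      by (auto simp: rel_sum_def)
    have "(x - x, g - ?f) \<in> A" using subspace_Pair_diff[OF A(1) g f_in_A] h by blast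
    then have "g - ?f \<in> orth (Domain S)"
      using hermitian_Image_zero[OF A(3)] orth_antimono[OF dom] by auto
    then have "(0, g - ?f) \<in> S" using self_adjoint_Image_zero[OF S(2)] by blast
    then have "(x + 0 + 0, h + (g - ?f) + (?f - ?Q ?f)) \<in> S"
      by (intro subspace_Pair_add[OF S(1)] h residual)
    then show "(x, y - QAs S A x) \<in> S" by (simp add: y QAs_def algebra_simps)
  next
    assume shifted: "(x, y - QAs S A x) \<in> S"
    have "(x - 0, (y - ?Q ?f) - (?f - ?Q ?f)) \<in> S"
      using subspace_Pair_diff[OF S(1) shifted[unfolded QAs_def] residual] .
    then have "(x, y - ?f) \<in> S" by simp
    moreover have "(x, ?f) \<in> A" using f_in_A shifted by blast
    ultimately have "(x, (y - ?f) + ?f) \<in> rel_sum S A" unfolding rel_sum_def by blast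
    then show "(x, y) \<in> rel_sum S A" by simp
  qed
qed

lemma rel_sum_iff_QAs_eq_0:
  fixes S A :: "('a::chilbert_space \<times> 'a) set"
  assumes S: "complex_vector.subspace S" "self_adjoint S"
    and A: "complex_vector.subspace A" "closed A" "hermitian A"
    and dom: "Domain S \<subseteq> Domain A" and "(x, y) \<in> S"
  shows "(x, y) \<in> rel_sum S A \<longleftrightarrow> QAs S A x = 0"
proof
  assume "(x, y) \<in> rel_sum S A"
  then have "(x - x, y - (y - QAs S A x)) \<in> S"
    using rel_sum_iff_shift[OF S A dom] subspace_Pair_diff[OF S(1) \<open>(x, y) \<in> S\<close>] by blast
  then have "QAs S A x \<in> S `` {0}" by simp
  then show "QAs S A x = 0" by (rule orth_Int_self[OF _ QAs_in_orth])
qed (use rel_sum_iff_shift[OF S A dom] \<open>(x, y) \<in> S\<close> in simp)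

theorem theorem3p7:
  fixes T S A :: "('a::chilbert_space \<times> 'a) set"
  assumes "lin_subspace T" and "closed T" and "hermitian T"
    and "lin_subspace A" and "closed A" and "hermitian A"
    and "lin_subspace S" and "self_adjoint S"
    and "Domain T = Domain S" and "Domain S \<subseteq> Domain A"
    and "T = rel_sum S A"
    and "resolvent_set T \<inter> resolvent_set S \<noteq> {}"
  shows "fin_dim scaleC (QAs_range S A (Domain T)) \<longleftrightarrow> finite_rank_perturbation T S"
proof -
  have T: "complex_vector.subspace T" and A: "complex_vector.subspace A" "closed A" "hermitian A"
    and S: "complex_vector.subspace S" "self_adjoint S"
    using assms by (simp_all add: lin_subspace_iff_subspace)
  have "closed S" using closed_adj \<open>self_adjoint S\<close> by (metis self_adjoint_def)
  note shift = rel_sum_iff_shift[OF S A \<open>Domain S \<subseteq> Domain A\<close>, folded \<open>T = rel_sum S A\<close>]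
  note vanish = rel_sum_iff_QAs_eq_0[OF S A \<open>Domain S \<subseteq> Domain A\<close>, folded \<open>T = rel_sum S A\<close>]
  define \<Phi> :: "'a \<times> 'a \<Rightarrow> 'a" where "\<Phi> t = QAs S A (fst t)" for t
  have lin: "clinear_on R \<Phi>" if "Domain R \<subseteq> Domain A" for R
    unfolding \<Phi>_def by (rule clinear_on_comp_fst[OF clinear_on_QAs[OF A(1,2)] that])
  have image_\<Phi>: "\<Phi> ` R = QAs S A ` Domain R" for R
    unfolding \<Phi>_def by (metis fst_eq_Domain image_image)
  then have "\<Phi> ` S \<subseteq> \<Phi> ` T" by (simp add: assms(9))
  moreover have "QAs_range S A (Domain T) = \<Phi> ` T"
    using QAs_range_eq_image[OF A(1,2)] assms(9,10) by (simp add: image_\<Phi>)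
  ultimately show ?thesis
    unfolding finite_rank_perturbation_iff
    using shift vanish
    by (subst fin_dim_oproj_diff_iff_fin_dim_image[OF S(1) \<open>closed S\<close> T \<open>closed T\<close>
          lin[OF assms(10)] lin[OF assms(10)[folded assms(9)]]])
      (auto simp: \<Phi>_def)
qed

end
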